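(* Consider the following Markov decision problem with a finite horizon of $N\ge 1$ decision epochs. The state space is $[0,\infty)\times[0,\infty)$ and at every state the action set is $\{0,1\}$. In state $\xi=(\xi_1,\xi_2)$, taking action $a\in\{0,1\}$ yields the (time-homogeneous) reward $r(\xi,a)=\xi_{1+a}$. The next state $\xi'$ is obtained as follows: if $a=1$ then $\xi'=(\xi_1+\zeta,\xi_2)$ with $\zeta$ having density $p_1$; if $a=0$ then $\xi'=(\xi_1,\xi_2+\zeta)$ with $\zeta$ having density $p_2$. Here $p_1,p_2$ are probability densities on $[0,\infty)$ with respect to a $\sigma$-finite measure $\lambda$, having a common finite mean $\theta$. Then the greedy policy, which takes action $1$ when $\xi_1<\xi_2$ and action $0$ when $\xi_1>\xi_2$ (with either action allowed when $\xi_1=\xi_2$), is optimal under the total expected reward criterion: for every $N\ge1$ and every initial state, it attains the maximum expected total reward over $N$ epochs among all policies.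
   Context: In the application of the paper, $\xi=(\Gamma_{\mathbf R}[R(n)],\Gamma_{\mathbf S}[S(n)])$, action $1$ means reading the next record from source $\mathbf R$, and the reward is the expected number of new matches; but the claim is the abstract statement above. "Policies" means general (history-dependent, possibly randomized) Markov decision policies. *)

theory Defs
  imports "HOL-Probability.Probability"
begin

text \<open>States are pairs of reals (the state space is [0,oo) x [0,oo)); actions are
  booleans, True = action 1, False = action 0.
  A history at decision epoch t consists of the past states xi_0 .. xi_(t-1),
  stored in positions less than t of a function hs, and the past actions a_0 .. a_(t-1),
  stored in positions less than t of a function ha (positions beyond t carry fixed
  default values). A general (history-dependent, randomized) policy assigns to each
  epoch t, history (hs, ha) and current state xi the probability of choosing action 1.\<close>

type_synonym state = "real \<times> real"
type_synonym policy = "nat \<Rightarrow> (nat \<Rightarrow> state) \<Rightarrow> (nat \<Rightarrow> bool) \<Rightarrow> state \<Rightarrow> real"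

definition history_space :: "((nat \<Rightarrow> state) \<times> (nat \<Rightarrow> bool)) measure" where
  "history_space = PiM UNIV (\<lambda>_. borel) \<Otimes>\<^sub>M PiM UNIV (\<lambda>_. count_space UNIV)"

definition admissible_policy :: "policy \<Rightarrow> bool" where
  "admissible_policy \<pi> \<longleftrightarrow>
     (\<forall>t hs ha \<xi>. 0 \<le> \<pi> t hs ha \<xi> \<and> \<pi> t hs ha \<xi> \<le> 1) \<and>
     (\<forall>t. (\<lambda>(h, \<xi>). \<pi> t (fst h) (snd h) \<xi>) \<in> borel_measurable (history_space \<Otimes>\<^sub>M borel))"

definition reward :: "state \<Rightarrow> bool \<Rightarrow> real" where
  "reward \<xi> a = (if a then snd \<xi> else fst \<xi>)"

text \<open>Expected total reward of the remaining n epochs, starting at epoch t with history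
  (hs, ha) in state xi, when following policy pi.\<close>
primrec val :: "real measure \<Rightarrow> (real \<Rightarrow> real) \<Rightarrow> (real \<Rightarrow> real) \<Rightarrow> policy \<Rightarrow>
    nat \<Rightarrow> nat \<Rightarrow> (nat \<Rightarrow> state) \<Rightarrow> (nat \<Rightarrow> bool) \<Rightarrow> state \<Rightarrow> ennreal" where
  "val lam p1 p2 \<pi> 0 t hs ha \<xi> = 0"
| "val lam p1 p2 \<pi> (Suc n) t hs ha \<xi> =
     ennreal (\<pi> t hs ha \<xi>) *
       (ennreal (reward \<xi> True) +
        (\<integral>\<^sup>+ z\<in>{0..}. ennreal (p1 z) *
            val lam p1 p2 \<pi> n (Suc t) (hs(t := \<xi>)) (ha(t := True)) (fst \<xi> + z, snd \<xi>) \<partial>lam))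
   + ennreal (1 - \<pi> t hs ha \<xi>) *
       (ennreal (reward \<xi> False) +
        (\<integral>\<^sup>+ z\<in>{0..}. ennreal (p2 z) *
            val lam p1 p2 \<pi> n (Suc t) (hs(t := \<xi>)) (ha(t := False)) (fst \<xi>, snd \<xi> + z) \<partial>lam))"

definition total_reward :: "real measure \<Rightarrow> (real \<Rightarrow> real) \<Rightarrow> (real \<Rightarrow> real) \<Rightarrow> policy \<Rightarrow>
    nat \<Rightarrow> state \<Rightarrow> ennreal" where
  "total_reward lam p1 p2 \<pi> N \<xi>0 = val lam p1 p2 \<pi> N 0 (\<lambda>_. (0, 0)) (\<lambda>_. False) \<xi>0"

definition density_with_mean :: "real measure \<Rightarrow> (real \<Rightarrow> real) \<Rightarrow> real \<Rightarrow> bool" where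
  "density_with_mean lam p \<theta> \<longleftrightarrow>
     p \<in> borel_measurable borel \<and> (\<forall>x\<ge>0. 0 \<le> p x) \<and>
     (\<integral>\<^sup>+ x\<in>{0..}. ennreal (p x) \<partial>lam) = 1 \<and>
     (\<integral>\<^sup>+ x\<in>{0..}. ennreal (x * p x) \<partial>lam) = ennreal \<theta>"

definition greedy_policy :: "policy \<Rightarrow> bool" where
  "greedy_policy g \<longleftrightarrow> admissible_policy g \<and>
     (\<forall>t hs ha \<xi>. (fst \<xi> < snd \<xi> \<longrightarrow> g t hs ha \<xi> = 1) \<and>
                  (fst \<xi> > snd \<xi> \<longrightarrow> g t hs ha \<xi> = 0))"

end

theory Submission
  imports Defs
begin

(* The optimal value satisfies the Bellman recursion, and the value of any policy is a
   convex combination of action values, hence bounded by it. The greedy policy attains it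
   because of an interchange argument, proved by induction on the horizon: in a state (a, b)
   with a <= b, reading from source 2 first leads to (a, b + Y) where reading from source 1
   is again optimal; swapping the two reads by Fubini changes the immediate rewards from
   a + (b + theta) to b + (a + theta), equal because both increments have mean theta, and
   leaves a continuation that is available after reading from source 1 first. *)

definition next_state :: "state \<Rightarrow> bool \<Rightarrow> real \<Rightarrow> state" where
  "next_state \<xi> a z = (if a then (fst \<xi> + z, snd \<xi>) else (fst \<xi>, snd \<xi> + z))"

definition action_value :: "real measure \<Rightarrow> (real \<Rightarrow> real) \<Rightarrow> (real \<Rightarrow> real) \<Rightarrow>
    (state \<Rightarrow> ennreal) \<Rightarrow> state \<Rightarrow> bool \<Rightarrow> ennreal" where
  "action_value lam p1 p2 V \<xi> a = ennreal (reward \<xi> a) +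
     (\<integral>\<^sup>+ z\<in>{0..}. ennreal ((if a then p1 else p2) z) * V (next_state \<xi> a z) \<partial>lam)"

primrec optimal_value :: "real measure \<Rightarrow> (real \<Rightarrow> real) \<Rightarrow> (real \<Rightarrow> real) \<Rightarrow>
    nat \<Rightarrow> state \<Rightarrow> ennreal" where
  "optimal_value lam p1 p2 0 \<xi> = 0"
| "optimal_value lam p1 p2 (Suc n) \<xi> =
     max (action_value lam p1 p2 (optimal_value lam p1 p2 n) \<xi> True)
         (action_value lam p1 p2 (optimal_value lam p1 p2 n) \<xi> False)"

lemma val_Suc_action_value:
  "val lam p1 p2 \<pi> (Suc n) t hs ha \<xi> =
     ennreal (\<pi> t hs ha \<xi>) *
       action_value lam p1 p2 (val lam p1 p2 \<pi> n (Suc t) (hs(t := \<xi>)) (ha(t := True))) \<xi> True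
   + ennreal (1 - \<pi> t hs ha \<xi>) *
       action_value lam p1 p2 (val lam p1 p2 \<pi> n (Suc t) (hs(t := \<xi>)) (ha(t := False))) \<xi> False"
  by (simp add: action_value_def next_state_def)

lemma action_value_mono:
  assumes "\<And>z. 0 \<le> z \<Longrightarrow> V (next_state \<xi> a z) \<le> V' (next_state \<xi> a z)"
  shows "action_value lam p1 p2 V \<xi> a \<le> action_value lam p1 p2 V' \<xi> a"
  using assms unfolding action_value_def
  by (cases a) (auto intro!: add_left_mono nn_integral_mono mult_left_mono split: split_indicator)

lemma action_value_swap:
  "action_value lam p1 p2 V (a, b) c = action_value lam p2 p1 (V \<circ> prod.swap) (b, a) (\<not> c)"
  by (simp add: action_value_def next_state_def reward_def)

lemma optimal_value_swap:
  "optimal_value lam p1 p2 n \<circ> prod.swap = optimal_value lam p2 p1 n"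
proof (induction n)
  case (Suc n)
  show ?case
  proof
    fix \<xi> :: state
    show "(optimal_value lam p1 p2 (Suc n) \<circ> prod.swap) \<xi> = optimal_value lam p2 p1 (Suc n) \<xi>"
      by (cases \<xi>) (simp add: action_value_swap[of lam p1 p2] Suc max.commute)
  qed
qed (simp add: comp_def)

lemma convex_combination_le:
  fixes x y M :: ennreal
  assumes "0 \<le> q" "q \<le> 1" "x \<le> M" "y \<le> M"
  shows "ennreal q * x + ennreal (1 - q) * y \<le> M"
proof -
  have "ennreal q * x + ennreal (1 - q) * y \<le> ennreal q * M + ennreal (1 - q) * M"
    using assms by (intro add_mono mult_left_mono) auto
  also have "\<dots> = M"
    using assms by (simp flip: distrib_right ennreal_plus)
  finally show ?thesis .
qed

lemma val_le_optimal_value: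
  assumes "admissible_policy \<pi>"
  shows "val lam p1 p2 \<pi> n t hs ha \<xi> \<le> optimal_value lam p1 p2 n \<xi>"
proof (induction n arbitrary: t hs ha \<xi>)
  case (Suc n)
  have "0 \<le> \<pi> t hs ha \<xi>" "\<pi> t hs ha \<xi> \<le> 1"
    using assms unfolding admissible_policy_def by blast+
  then show ?case
    unfolding val_Suc_action_value optimal_value.simps
    by (intro convex_combination_le order_trans[OF action_value_mono max.cobounded1]
        order_trans[OF action_value_mono max.cobounded2] Suc.IH)
qed simp

context
  fixes lam :: "real measure"
  assumes sets_lam: "sets lam = sets borel" and sigma_finite_lam: "sigma_finite_measure lam"
begin

lemma measurable_lam_borel_eq: "measurable lam (borel :: ennreal measure) = borel_measurable borel"
  by (rule measurable_cong_sets[OF sets_lam refl])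

lemma borel_measurable_nn_integral_lam:
  assumes "case_prod f \<in> borel_measurable (M \<Otimes>\<^sub>M borel)"
  shows "(\<lambda>x. \<integral>\<^sup>+ y. f x y \<partial>lam) \<in> borel_measurable M"
proof -
  interpret sigma_finite_measure lam by (fact sigma_finite_lam)
  have "measurable (M \<Otimes>\<^sub>M lam) (borel :: ennreal measure) = borel_measurable (M \<Otimes>\<^sub>M borel)"
    by (rule measurable_cong_sets[OF sets_pair_measure_cong[OF refl sets_lam] refl])
  with assms show ?thesis by (intro borel_measurable_nn_integral) simp
qed

lemma action_value_measurable:
  assumes [measurable]: "p1 \<in> borel_measurable borel" "p2 \<in> borel_measurable borel"
    and [measurable]: "V \<in> borel_measurable (borel \<Otimes>\<^sub>M borel)"
  shows "(\<lambda>\<xi>. action_value lam p1 p2 V \<xi> a) \<in> borel_measurable (borel \<Otimes>\<^sub>M borel)"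
proof -
  have [measurable]: "(\<lambda>\<xi>. \<integral>\<^sup>+ z\<in>{0..}. ennreal ((if a then p1 else p2) z) * V (next_state \<xi> a z) \<partial>lam)
      \<in> borel_measurable (borel \<Otimes>\<^sub>M borel)"
    by (rule borel_measurable_nn_integral_lam) (cases a; simp add: next_state_def; measurable)
  show ?thesis
    unfolding action_value_def reward_def by measurable
qed

lemma optimal_value_measurable:
  assumes "p1 \<in> borel_measurable borel" "p2 \<in> borel_measurable borel"
  shows "optimal_value lam p1 p2 n \<in> borel_measurable (borel \<Otimes>\<^sub>M borel)"
proof (induction n)
  case (Suc n)
  note [measurable] = action_value_measurable[OF assms Suc.IH]
  show ?case by simp
qed simp

lemma set_nn_integral_density_mean:
  assumes "density_with_mean lam p \<theta>" and "0 \<le> a" and [measurable]: "F \<in> borel_measurable borel"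
  shows "(\<integral>\<^sup>+ z\<in>{0..}. ennreal (p z) * (ennreal (a + z) + F z) \<partial>lam)
       = ennreal a + ennreal \<theta> + (\<integral>\<^sup>+ z\<in>{0..}. ennreal (p z) * F z \<partial>lam)"
proof -
  have [measurable]: "p \<in> borel_measurable borel" and p_nonneg: "\<And>z. 0 \<le> z \<Longrightarrow> 0 \<le> p z"
    and mass: "(\<integral>\<^sup>+ z\<in>{0..}. ennreal (p z) \<partial>lam) = 1"
    and mean: "(\<integral>\<^sup>+ z\<in>{0..}. ennreal (z * p z) \<partial>lam) = ennreal \<theta>"
    using assms(1) unfolding density_with_mean_def by auto
  have split: "ennreal (p z) * (ennreal (a + z) + F z) * indicator {0..} z
     = ennreal a * (ennreal (p z) * indicator {0..} z) + ennreal (z * p z) * indicator {0..} z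
       + ennreal (p z) * F z * indicator {0..} z" for z
    using \<open>0 \<le> a\<close> p_nonneg[of z]
    by (cases "0 \<le> z") (simp_all add: ennreal_plus ennreal_mult distrib_left mult_ac)
  show ?thesis
    unfolding split using mass mean
    by (simp add: nn_integral_add nn_integral_cmult measurable_lam_borel_eq)
qed

lemma set_nn_integral_densities_commute:
  fixes f :: "real \<Rightarrow> real \<Rightarrow> ennreal"
  assumes [measurable]: "p1 \<in> borel_measurable borel" "p2 \<in> borel_measurable borel"
    and [measurable]: "case_prod f \<in> borel_measurable (borel \<Otimes>\<^sub>M borel)"
  shows "(\<integral>\<^sup>+ y\<in>{0..}. ennreal (p2 y) * (\<integral>\<^sup>+ x\<in>{0..}. ennreal (p1 x) * f x y \<partial>lam) \<partial>lam)
       = (\<integral>\<^sup>+ x\<in>{0..}. ennreal (p1 x) * (\<integral>\<^sup>+ y\<in>{0..}. ennreal (p2 y) * f x y \<partial>lam) \<partial>lam)"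
proof -
  interpret pair_sigma_finite lam lam
    by (simp add: pair_sigma_finite_def sigma_finite_lam)
  define h where "h x y = ennreal (p1 x) * indicator {0..} x * (ennreal (p2 y) * indicator {0..} y) * f x y"
    for x y
  have "case_prod h \<in> borel_measurable (borel \<Otimes>\<^sub>M borel)"
    unfolding h_def by measurable
  then have h_measurable: "case_prod h \<in> borel_measurable (lam \<Otimes>\<^sub>M lam)"
    by (simp add: measurable_cong_sets[OF sets_pair_measure_cong[OF sets_lam sets_lam] refl])
  have inner_y: "ennreal (p2 y) * (\<integral>\<^sup>+ x\<in>{0..}. ennreal (p1 x) * f x y \<partial>lam) * indicator {0..} y
      = (\<integral>\<^sup>+ x. h x y \<partial>lam)" for y
    by (simp add: h_def measurable_lam_borel_eq mult_ac flip: nn_integral_cmult)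
  have inner_x: "ennreal (p1 x) * (\<integral>\<^sup>+ y\<in>{0..}. ennreal (p2 y) * f x y \<partial>lam) * indicator {0..} x
      = (\<integral>\<^sup>+ y. h x y \<partial>lam)" for x
    by (simp add: h_def measurable_lam_borel_eq mult_ac flip: nn_integral_cmult)
  show ?thesis
    unfolding inner_x inner_y by (rule Fubini'[OF h_measurable])
qed

lemma action_value_False_le_True:
  assumes d1: "density_with_mean lam p1 \<theta>" and d2: "density_with_mean lam p2 \<theta>"
  shows "0 \<le> a \<Longrightarrow> a \<le> b \<Longrightarrow>
    action_value lam p1 p2 (optimal_value lam p1 p2 n) (a, b) False
      \<le> action_value lam p1 p2 (optimal_value lam p1 p2 n) (a, b) True"
proof (induction n arbitrary: a b)
  case 0
  then show ?case by (simp add: action_value_def reward_def)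
next
  case (Suc m)
  let ?W = "optimal_value lam p1 p2"
  let ?Q = "action_value lam p1 p2 (?W m)"
  have [measurable]: "p1 \<in> borel_measurable borel" "p2 \<in> borel_measurable borel"
    using d1 d2 unfolding density_with_mean_def by auto
  note [measurable] = optimal_value_measurable[of p1 p2 m]
  have [measurable]: "(\<lambda>y. \<integral>\<^sup>+ x\<in>{0..}. ennreal (p1 x) * ?W m (a + x, b + y) \<partial>lam) \<in> borel_measurable borel"
    "(\<lambda>x. \<integral>\<^sup>+ y\<in>{0..}. ennreal (p2 y) * ?W m (a + x, b + y) \<partial>lam) \<in> borel_measurable borel"
    by (rule borel_measurable_nn_integral_lam; measurable)+
  have fubini: "(\<integral>\<^sup>+ y\<in>{0..}. ennreal (p2 y) * (\<integral>\<^sup>+ x\<in>{0..}. ennreal (p1 x) * ?W m (a + x, b + y) \<partial>lam) \<partial>lam)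
      = (\<integral>\<^sup>+ x\<in>{0..}. ennreal (p1 x) * (\<integral>\<^sup>+ y\<in>{0..}. ennreal (p2 y) * ?W m (a + x, b + y) \<partial>lam) \<partial>lam)"
    by (rule set_nn_integral_densities_commute) measurable
  have read_first: "?W (Suc m) (a, b + y) = ?Q (a, b + y) True" if "0 \<le> y" for y
    using Suc.IH[of a "b + y"] Suc.prems that by (simp add: max_absorb1)
  have "action_value lam p1 p2 (?W (Suc m)) (a, b) False
      = ennreal a + (\<integral>\<^sup>+ y\<in>{0..}. ennreal (p2 y) * ?W (Suc m) (a, b + y) \<partial>lam)"
    by (simp add: action_value_def reward_def next_state_def del: optimal_value.simps)
  also have "\<dots> = ennreal a + (\<integral>\<^sup>+ y\<in>{0..}. ennreal (p2 y) * ?Q (a, b + y) True \<partial>lam)"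
    by (auto simp: read_first simp del: optimal_value.simps intro!: nn_integral_cong split: split_indicator)
  also have "\<dots> = ennreal a + (\<integral>\<^sup>+ y\<in>{0..}. ennreal (p2 y) *
      (ennreal (b + y) + (\<integral>\<^sup>+ x\<in>{0..}. ennreal (p1 x) * ?W m (a + x, b + y) \<partial>lam)) \<partial>lam)"
    by (simp add: action_value_def reward_def next_state_def add.commute)
  also have "\<dots> = ennreal a + ennreal b + ennreal \<theta> + (\<integral>\<^sup>+ y\<in>{0..}. ennreal (p2 y) *
      (\<integral>\<^sup>+ x\<in>{0..}. ennreal (p1 x) * ?W m (a + x, b + y) \<partial>lam) \<partial>lam)"
    using Suc.prems by (simp add: set_nn_integral_density_mean[OF d2] add.assoc)
  also have "\<dots> = ennreal b + ennreal a + ennreal \<theta> + (\<integral>\<^sup>+ x\<in>{0..}. ennreal (p1 x) *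
      (\<integral>\<^sup>+ y\<in>{0..}. ennreal (p2 y) * ?W m (a + x, b + y) \<partial>lam) \<partial>lam)"
    unfolding fubini by (simp add: add_ac)
  also have "\<dots> = ennreal b + (\<integral>\<^sup>+ x\<in>{0..}. ennreal (p1 x) *
      (ennreal (a + x) + (\<integral>\<^sup>+ y\<in>{0..}. ennreal (p2 y) * ?W m (a + x, b + y) \<partial>lam)) \<partial>lam)"
    using Suc.prems by (simp add: set_nn_integral_density_mean[OF d1] add.assoc)
  also have "\<dots> = ennreal b + (\<integral>\<^sup>+ x\<in>{0..}. ennreal (p1 x) * ?Q (a + x, b) False \<partial>lam)"
    by (simp add: action_value_def reward_def next_state_def)
  also have "\<dots> \<le> ennreal b + (\<integral>\<^sup>+ x\<in>{0..}. ennreal (p1 x) * ?W (Suc m) (a + x, b) \<partial>lam)"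
    by (intro add_left_mono nn_integral_mono mult_right_mono mult_left_mono) auto
  also have "\<dots> = action_value lam p1 p2 (?W (Suc m)) (a, b) True"
    by (simp add: action_value_def reward_def next_state_def del: optimal_value.simps)
  finally show ?case .
qed

lemma optimal_value_Suc_read_first:
  assumes "density_with_mean lam p1 \<theta>" "density_with_mean lam p2 \<theta>" "0 \<le> a" "a \<le> b"
  shows "optimal_value lam p1 p2 (Suc n) (a, b) = action_value lam p1 p2 (optimal_value lam p1 p2 n) (a, b) True"
  using action_value_False_le_True[OF assms] by (simp add: max_absorb1)

lemma optimal_value_Suc_read_second:
  assumes "density_with_mean lam p1 \<theta>" "density_with_mean lam p2 \<theta>" "0 \<le> b" "b \<le> a"
  shows "optimal_value lam p1 p2 (Suc n) (a, b) = action_value lam p1 p2 (optimal_value lam p1 p2 n) (a, b) False"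
  using action_value_False_le_True[OF assms(2,1,3,4), of n]
  by (simp add: action_value_swap[of lam p1 p2] optimal_value_swap max_absorb2)

lemma optimal_value_Suc_greedy:
  assumes "density_with_mean lam p1 \<theta>" "density_with_mean lam p2 \<theta>" and "greedy_policy g"
    and "0 \<le> fst \<xi>" "0 \<le> snd \<xi>"
  shows "optimal_value lam p1 p2 (Suc n) \<xi> =
    ennreal (g t hs ha \<xi>) * action_value lam p1 p2 (optimal_value lam p1 p2 n) \<xi> True
    + ennreal (1 - g t hs ha \<xi>) * action_value lam p1 p2 (optimal_value lam p1 p2 n) \<xi> False"
proof -
  obtain a b where \<xi>: "\<xi> = (a, b)" by force
  have "admissible_policy g" and greedy: "a < b \<Longrightarrow> g t hs ha \<xi> = 1" "b < a \<Longrightarrow> g t hs ha \<xi> = 0"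
    using assms(3) \<xi> unfolding greedy_policy_def by auto
  then have "0 \<le> g t hs ha \<xi>" "g t hs ha \<xi> \<le> 1"
    unfolding admissible_policy_def by blast+
  note read_first = optimal_value_Suc_read_first[OF assms(1,2)]
    and read_second = optimal_value_Suc_read_second[OF assms(1,2)]
  consider "a < b" | "b < a" | "a = b" by fastforce
  then show ?thesis
  proof cases
    case 3
    then have "action_value lam p1 p2 (optimal_value lam p1 p2 n) \<xi> True
        = action_value lam p1 p2 (optimal_value lam p1 p2 n) \<xi> False"
      using read_first[of a b n] read_second[of b a n] assms(4) \<xi> by simp
    with \<open>0 \<le> g t hs ha \<xi>\<close> \<open>g t hs ha \<xi> \<le> 1\<close> show ?thesis
      by (simp add: \<xi> read_first assms(4) flip: distrib_right ennreal_plus)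
  qed (use greedy read_first read_second assms(4,5) \<xi> in auto)
qed

lemma optimal_value_le_greedy_val:
  assumes "density_with_mean lam p1 \<theta>" "density_with_mean lam p2 \<theta>" and "greedy_policy g"
  shows "0 \<le> fst \<xi> \<Longrightarrow> 0 \<le> snd \<xi> \<Longrightarrow> optimal_value lam p1 p2 n \<xi> \<le> val lam p1 p2 g n t hs ha \<xi>"
proof (induction n arbitrary: t hs ha \<xi>)
  case (Suc n)
  then show ?case
    unfolding optimal_value_Suc_greedy[OF assms Suc.prems, where t = t and hs = hs and ha = ha]
      val_Suc_action_value
    by (intro add_mono mult_left_mono action_value_mono Suc.IH) (auto simp: next_state_def)
qed simp

end

theorem theorem2p1:
  fixes lam :: "real measure" and p1 p2 :: "real \<Rightarrow> real" and \<theta> :: real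
    and g :: policy and N :: nat and \<xi>0 :: state
  assumes "sets lam = sets borel" and "sigma_finite_measure lam"
    and "\<theta> \<ge> 0"
    and "density_with_mean lam p1 \<theta>" and "density_with_mean lam p2 \<theta>"
    and "greedy_policy g"
    and "N \<ge> 1" and "fst \<xi>0 \<ge> 0" and "snd \<xi>0 \<ge> 0"
  shows "\<forall>\<pi>. admissible_policy \<pi> \<longrightarrow>
           total_reward lam p1 p2 \<pi> N \<xi>0 \<le> total_reward lam p1 p2 g N \<xi>0"
proof (intro allI impI)
  fix \<pi> assume "admissible_policy \<pi>"
  then have "total_reward lam p1 p2 \<pi> N \<xi>0 \<le> optimal_value lam p1 p2 N \<xi>0"
    unfolding total_reward_def by (rule val_le_optimal_value)
  also have "\<dots> \<le> total_reward lam p1 p2 g N \<xi>0"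
    unfolding total_reward_def using assms
    by (intro optimal_value_le_greedy_val[of lam p1 \<theta> p2 g]) auto
  finally show "total_reward lam p1 p2 \<pi> N \<xi>0 \<le> total_reward lam p1 p2 g N \<xi>0" .
qed

end
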